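(* There exists a non-convex polyhedron $P \subset \mathbb{R}^3$ whose surface $\partial P$ is isometric to the surface $\partial C$ of a cube $C$ with $\operatorname{vol}(C) < \operatorname{vol}(P)$. Equivalently, for the unit cube $C=[0,1]^3$ there is a non-convex polyhedron $P$ with $\partial P$ isometric to $\partial C$ and $\operatorname{vol}(P) > 1$. *)

theory Defs
  imports "HOL-Analysis.Analysis"
begin

definition path_length :: "(real \<Rightarrow> 'a::metric_space) \<Rightarrow> ereal" where
  "path_length g = (SUP (n, t) \<in> {(n::nat, t::nat \<Rightarrow> real). t 0 = 0 \<and> t n = 1 \<and> (\<forall>i<n. t i \<le> t (Suc i))}.
      ereal (\<Sum>i<n. dist (g (t i)) (g (t (Suc i)))))"

definition intrinsic_dist :: "'a::metric_space set \<Rightarrow> 'a \<Rightarrow> 'a \<Rightarrow> ereal" where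
  "intrinsic_dist S x y = (INF g \<in> {g. path g \<and> path_image g \<subseteq> S \<and> pathstart g = x \<and> pathfinish g = y}.
      path_length g)"

definition intrinsically_isometric :: "'a::metric_space set \<Rightarrow> 'b::metric_space set \<Rightarrow> bool" where
  "intrinsically_isometric S T \<longleftrightarrow> (\<exists>f. bij_betw f S T \<and>
      (\<forall>x\<in>S. \<forall>y\<in>S. intrinsic_dist T (f x) (f y) = intrinsic_dist S x y))"

definition polyhedron3 :: "(real^3) set \<Rightarrow> bool" where
  "polyhedron3 P \<longleftrightarrow> (\<exists>F. finite F \<and> F \<noteq> {} \<and> (\<forall>Q\<in>F. polytope Q \<and> aff_dim Q = 3) \<and> P = \<Union>F)"

definition unit_cube3 :: "(real^3) set" where
  "unit_cube3 = {x. \<forall>i. 0 \<le> x $ i \<and> x $ i \<le> 1}"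

end

theory Submission
  imports Defs
begin

text \<open>Take the cube \<open>[-1/2, 1/2]\<^sup>3\<close>.  Its 48 symmetries cut it into congruent cones from the
  centre over the triangle with vertices a face centre, an edge midpoint and a vertex.  Subdivide
  this triangle into four triangles and move their vertices so that each of the four keeps its shape,
  the face centre moving outwards (to height \<open>7/11\<close>) and the cube vertex inwards (to \<open>16/33\<close>).
  Coning from the centre and extending by symmetry yields a piecewise linear injective map of
  \<open>\<real>\<^sup>3\<close> taking the cube onto a polyhedron \<open>P\<close> whose surface is made of triangles congruent to those
  of the cube's surface; such a piecewise isometry preserves the lengths of paths, hence intrinsic
  distances.  The volume of \<open>P\<close> is \<open>48 \<cdot> 9173/383328 = 9173/7986 > 1\<close>, and \<open>P\<close> is not convex since
  the midpoint of two adjacent vertices of \<open>P\<close> lies beyond the pushed-in edge midpoint.\<close>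

definition inscribed_length_ge :: "(real \<Rightarrow> 'a::metric_space) \<Rightarrow> real \<Rightarrow> real \<Rightarrow> real \<Rightarrow> bool" where
  "inscribed_length_ge g a b r \<longleftrightarrow> (\<exists>n t. t 0 = a \<and> t n = b \<and> (\<forall>i<n. t i \<le> t (Suc i)) \<and>
      r \<le> (\<Sum>i<n. dist (g (t i)) (g (t (Suc i)))))"

lemma inscribed_length_ge_mono: "inscribed_length_ge g a b r \<Longrightarrow> r' \<le> r \<Longrightarrow> inscribed_length_ge g a b r'"
  unfolding inscribed_length_ge_def by (blast intro: order_trans)

lemma inscribed_length_ge_refl: "inscribed_length_ge g a a 0"
  unfolding inscribed_length_ge_def by (intro exI[of _ 0] exI[of _ "\<lambda>_. a"]) auto

lemma inscribed_length_ge_chord: "a \<le> b \<Longrightarrow> inscribed_length_ge g a b (dist (g a) (g b))"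
  unfolding inscribed_length_ge_def
  by (intro exI[of _ 1] exI[of _ "\<lambda>i. if i = 0 then a else b"]) auto

lemma inscribed_length_ge_concat:
  assumes "inscribed_length_ge g a s r1" "inscribed_length_ge g s b r2"
  shows "inscribed_length_ge g a b (r1 + r2)"
proof -
  obtain n1 t1 where t1: "t1 0 = a" "t1 n1 = s" "\<forall>i<n1. t1 i \<le> t1 (Suc i)"
    "r1 \<le> (\<Sum>i<n1. dist (g (t1 i)) (g (t1 (Suc i))))"
    using assms(1) unfolding inscribed_length_ge_def by blast
  obtain n2 t2 where t2: "t2 0 = s" "t2 n2 = b" "\<forall>i<n2. t2 i \<le> t2 (Suc i)"
    "r2 \<le> (\<Sum>i<n2. dist (g (t2 i)) (g (t2 (Suc i))))"
    using assms(2) unfolding inscribed_length_ge_def by blast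
  define t where "t i = (if i \<le> n1 then t1 i else t2 (i - n1))" for i
  have t_low: "t i = t1 i" if "i \<le> n1" for i
    using that by (simp add: t_def)
  have t_high: "t (n1 + i) = t2 i" for i
    by (cases i) (auto simp: t_def t1 t2)
  have length_split: "(\<Sum>i<n1 + m. dist (g (t i)) (g (t (Suc i)))) =
      (\<Sum>i<n1. dist (g (t1 i)) (g (t1 (Suc i)))) + (\<Sum>i<m. dist (g (t2 i)) (g (t2 (Suc i))))" for m
  proof (induction m)
    case 0
    then show ?case
      by (auto intro!: sum.cong simp: t_low)
  next
    case (Suc m)
    have "t (n1 + m) = t2 m" "t (Suc (n1 + m)) = t2 (Suc m)"
      using t_high[of m] t_high[of "Suc m"] by auto
    then show ?case
      using Suc by simp
  qed
  show ?thesis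
    unfolding inscribed_length_ge_def
  proof (intro exI conjI allI impI)
    show "t 0 = a" "t (n1 + n2) = b"
      using t1(1) t_high[of n2] t2(2) by (simp_all add: t_def)
    show "r1 + r2 \<le> (\<Sum>i<n1 + n2. dist (g (t i)) (g (t (Suc i))))"
      using length_split[of n2] t1(4) t2(4) by simp
    fix i assume "i < n1 + n2"
    show "t i \<le> t (Suc i)"
    proof (cases "i < n1")
      case True
      then show ?thesis
        using t1(3) by (simp add: t_low)
    next
      case False
      then obtain k where "i = n1 + k" "k < n2"
        using \<open>i < n1 + n2\<close> by (metis add_less_imp_less_left le_Suc_ex not_less)
      then show ?thesis
        using t_high[of k] t_high[of "Suc k"] t2(3) by simp
    qed
  qed
qed

lemma image_closed_interval_subset:
  fixes g :: "real \<Rightarrow> 'a::topological_space"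
  assumes "continuous_on {s..b} g" "closed C" "s < b" "g ` {s<..b} \<subseteq> C"
  shows "g ` {s..b} \<subseteq> C"
proof -
  have "closed ({s..b} \<inter> g -` C)"
    using continuous_closed_preimage[OF assms(1) _ assms(2)] by simp
  moreover have "{s<..b} \<subseteq> {s..b} \<inter> g -` C"
    using assms(4) by auto
  ultimately have "closure {s<..b} \<subseteq> {s..b} \<inter> g -` C"
    by (rule closure_minimal[rotated])
  then show ?thesis
    using closure_greaterThanAtMost[OF assms(3)] by auto
qed

lemma last_exit_time:
  fixes g :: "real \<Rightarrow> 'a::metric_space"
  assumes g: "continuous_on {a..b} g" and "closed A" "closed C" "a \<le> b" "g a \<in> A"
    and cover: "g ` {a..b} \<subseteq> A \<union> C"
  obtains s where "a \<le> s" "s \<le> b" "g s \<in> A" "s < b \<Longrightarrow> g ` {s..b} \<subseteq> C"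
proof -
  have "compact ({a..b} \<inter> g -` A)"
    using continuous_closed_preimage[OF g _ assms(2)]
    by (simp add: compact_eq_bounded_closed bounded_Int)
  moreover have "a \<in> {a..b} \<inter> g -` A"
    using assms(4,5) by simp
  ultimately obtain s where "s \<in> {a..b} \<inter> g -` A" and last: "\<forall>t \<in> {a..b} \<inter> g -` A. t \<le> s"
    using compact_attains_sup by blast
  then have s: "a \<le> s" "s \<le> b" "g s \<in> A"
    by auto
  have "g ` {s<..b} \<subseteq> C"
  proof
    fix x assume "x \<in> g ` {s<..b}"
    then obtain t where t: "s < t" "t \<le> b" "x = g t"
      by auto
    then have "t \<in> {a..b}"
      using s(1) by auto
    moreover have "g t \<notin> A"
      using last t(1) \<open>t \<in> {a..b}\<close> by force
    ultimately show "x \<in> C"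
      using cover t(3) by blast
  qed
  moreover have "continuous_on {s..b} g"
    by (rule continuous_on_subset[OF g]) (use s(1) in auto)
  ultimately show ?thesis
    using that[OF s] image_closed_interval_subset assms(3) by blast
qed

text \<open>A path is split at the last time it leaves the piece containing its current point; on that
  piece the chord does not grow under \<open>h\<close>, and the rest of the path runs through fewer pieces.\<close>

lemma inscribed_length_ge_piecewise_contraction:
  fixes g :: "real \<Rightarrow> 'a::metric_space" and h :: "'a \<Rightarrow> 'b::metric_space"
  assumes g: "continuous_on {0..1} g"
    and lip: "\<And>A. A \<in> \<A> \<Longrightarrow> 1-lipschitz_on A h"
    and closed: "\<And>A. A \<in> \<A> \<Longrightarrow> closed A"
    and "finite \<A>'" "\<A>' \<subseteq> \<A>" "0 \<le> a" "a \<le> b" "b \<le> 1" "g ` {a..b} \<subseteq> \<Union>\<A>'"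
  shows "inscribed_length_ge g a b (dist (h (g a)) (h (g b)))"
  using assms(4-)
proof (induction "card \<A>'" arbitrary: \<A>' a rule: less_induct)
  case less
  have "a \<in> {a..b}"
    using less.prems(4) by simp
  then obtain A where A: "A \<in> \<A>'" "g a \<in> A"
    using less.prems(6) by blast
  define \<B> where "\<B> = \<A>' - {A}"
  have g_ab: "continuous_on {a..b} g"
    by (rule continuous_on_subset[OF g]) (use less.prems(3,5) in auto)
  have "closed A" "closed (\<Union>\<B>)"
    using A(1) less.prems(1,2) closed by (auto simp: \<B>_def)
  moreover have "g ` {a..b} \<subseteq> A \<union> \<Union>\<B>"
    using less.prems(6) by (auto simp: \<B>_def)
  ultimately obtain s where s: "a \<le> s" "s \<le> b" "g s \<in> A" "s < b \<Longrightarrow> g ` {s..b} \<subseteq> \<Union>\<B>"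
    using last_exit_time[OF g_ab _ _ less.prems(4) A(2)] by metis
  have "dist (h (g a)) (h (g s)) \<le> dist (g a) (g s)"
    using lip[of A] A s(3) less.prems(2) by (auto simp: lipschitz_on_def)
  with inscribed_length_ge_chord[OF s(1)]
  have first_leg: "inscribed_length_ge g a s (dist (h (g a)) (h (g s)))"
    by (rule inscribed_length_ge_mono)
  show ?case
  proof (cases "s = b")
    case True
    then show ?thesis using first_leg by simp
  next
    case False
    have "card \<B> < card \<A>'"
      unfolding \<B>_def using less.prems(1) A(1) by (rule card_Diff1_less)
    then have "inscribed_length_ge g s b (dist (h (g s)) (h (g b)))"
      using less.prems(1-5) s False by (intro less.hyps) (auto simp: \<B>_def)
    then show ?thesis
      by (rule inscribed_length_ge_mono[OF inscribed_length_ge_concat[OF first_leg]]) (rule dist_triangle)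
  qed
qed

lemma path_length_compose_piecewise_contraction:
  fixes g :: "real \<Rightarrow> 'a::metric_space" and h :: "'a \<Rightarrow> 'b::metric_space"
  assumes "path g" "path_image g \<subseteq> \<Union>\<A>" "finite \<A>"
    and lip: "\<And>A. A \<in> \<A> \<Longrightarrow> 1-lipschitz_on A h"
    and closed: "\<And>A. A \<in> \<A> \<Longrightarrow> closed A"
  shows "path_length (h \<circ> g) \<le> path_length g"
  unfolding path_length_def[of "h \<circ> g"]
proof (rule SUP_least, clarify)
  fix n and t :: "nat \<Rightarrow> real"
  assume t: "t 0 = 0" "t n = 1" "\<forall>i<n. t i \<le> t (Suc i)"
  have t_mono: "t i \<le> t j" if "i \<le> j" "j \<le> n" for i j
    by (rule lift_Suc_mono_le_ivl[of "{..<n}"]) (use t(3) that in auto)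
  have t_range: "0 \<le> t i" "t i \<le> 1" if "i \<le> n" for i
    using t_mono[of 0 i] t_mono[of i n] t(1,2) that by auto
  have "inscribed_length_ge g 0 (t m) (\<Sum>i<m. dist (h (g (t i))) (h (g (t (Suc i)))))" if "m \<le> n" for m
    using that
  proof (induction m)
    case 0
    then show ?case using t(1) inscribed_length_ge_refl by simp
  next
    case (Suc m)
    have "g ` {t m..t (Suc m)} \<subseteq> \<Union>\<A>"
      using assms(2) t_range[of m] t_range[of "Suc m"] Suc.prems by (auto simp: path_image_def)
    then have "inscribed_length_ge g (t m) (t (Suc m)) (dist (h (g (t m))) (h (g (t (Suc m)))))"
      using inscribed_length_ge_piecewise_contraction[of g \<A> h \<A>] assms(1,3) lip closed
        t_range[of m] t_range[of "Suc m"] t(3) Suc.prems by (auto simp: path_def)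
    then show ?case
      using inscribed_length_ge_concat[OF Suc.IH] Suc.prems by simp
  qed
  from this[of n] obtain k u where u: "u 0 = 0" "u k = 1" "\<forall>i<k. u i \<le> u (Suc i)"
    "(\<Sum>i<n. dist (h (g (t i))) (h (g (t (Suc i))))) \<le> (\<Sum>i<k. dist (g (u i)) (g (u (Suc i))))"
    unfolding inscribed_length_ge_def using t(2) by auto
  then have "ereal (\<Sum>i<n. dist ((h \<circ> g) (t i)) ((h \<circ> g) (t (Suc i)))) \<le>
      ereal (\<Sum>i<k. dist (g (u i)) (g (u (Suc i))))"
    by simp
  also have "\<dots> \<le> path_length g"
    unfolding path_length_def using u(1-3) by (intro SUP_upper2[of "(k, u)"]) auto
  finally show "ereal (\<Sum>i<n. dist ((h \<circ> g) (t i)) ((h \<circ> g) (t (Suc i)))) \<le> path_length g" .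
qed

lemma intrinsic_dist_piecewise_contraction:
  fixes h :: "'a::metric_space \<Rightarrow> 'b::metric_space"
  assumes "h ` S \<subseteq> T" "finite \<A>" "\<Union>\<A> = S"
    and lip: "\<And>A. A \<in> \<A> \<Longrightarrow> 1-lipschitz_on A h"
    and closed: "\<And>A. A \<in> \<A> \<Longrightarrow> closed A"
  shows "intrinsic_dist T (h x) (h y) \<le> intrinsic_dist S x y"
  unfolding intrinsic_dist_def[of S]
proof (rule INF_greatest, clarify)
  fix g assume g: "path g" "path_image g \<subseteq> S" "x = pathstart g" "y = pathfinish g"
  have "continuous_on (\<Union>A\<in>\<A>. A) h"
    by (rule continuous_on_closed_Union[OF assms(2) closed lipschitz_on_continuous_on[OF lip]])
  then have "continuous_on S h"
    using assms(3) by simp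
  then have "path (h \<circ> g)"
    using g(1,2) by (metis path_continuous_image continuous_on_subset)
  moreover have "path_image (h \<circ> g) \<subseteq> T"
    using g(2) assms(1) by (auto simp: path_image_compose)
  ultimately have "intrinsic_dist T (h x) (h y) \<le> path_length (h \<circ> g)"
    unfolding intrinsic_dist_def using g(3,4)
    by (intro INF_lower) (auto simp: pathstart_compose pathfinish_compose)
  also have "\<dots> \<le> path_length g"
    using path_length_compose_piecewise_contraction[OF g(1) _ assms(2) lip closed] g(2) assms(3) by simp
  finally show "intrinsic_dist T (h (pathstart g)) (h (pathfinish g)) \<le> path_length g"
    using g(3,4) by simp
qed

lemma intrinsically_isometric_piecewise_isometry:
  fixes h :: "'a::metric_space \<Rightarrow> 'b::metric_space"
  assumes bij: "bij_betw h S T" and "finite \<A>" "\<Union>\<A> = S"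
    and compact: "\<And>A. A \<in> \<A> \<Longrightarrow> compact A"
    and isometric: "\<And>A x y. A \<in> \<A> \<Longrightarrow> x \<in> A \<Longrightarrow> y \<in> A \<Longrightarrow> dist (h x) (h y) = dist x y"
  shows "intrinsically_isometric T S"
proof -
  define f where "f = inv_into S h"
  have f_h: "f (h x) = x" if "x \<in> S" for x
    using bij that by (simp add: f_def bij_betw_inv_into_left)
  have h_f: "h (f u) = u" if "u \<in> T" for u
    using bij that by (simp add: f_def bij_betw_inv_into_right)
  have lip_h: "1-lipschitz_on A h" if "A \<in> \<A>" for A
    using isometric that by (simp add: lipschitz_on_def)
  have h_le: "intrinsic_dist T (h x) (h y) \<le> intrinsic_dist S x y" for x y
    using bij assms(2,3) lip_h compact
    by (intro intrinsic_dist_piecewise_contraction) (auto simp: bij_betw_def compact_imp_closed)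
  have f_le: "intrinsic_dist S (f u) (f v) \<le> intrinsic_dist T u v" for u v
  proof (rule intrinsic_dist_piecewise_contraction[of f T S "(`) h ` \<A>"])
    show "f ` T \<subseteq> S"
      using bij_betw_inv_into[OF bij] by (simp add: f_def bij_betw_def)
    show "\<Union> ((`) h ` \<A>) = T"
      using bij assms(3) by (auto simp: bij_betw_def)
    show "1-lipschitz_on A f" if A: "A \<in> (`) h ` \<A>" for A
    proof -
      obtain B where B: "B \<in> \<A>" "A = h ` B"
        using A by blast
      then have "B \<subseteq> S"
        using assms(3) by blast
      then show ?thesis
        using B isometric[OF B(1)] f_h by (auto simp: lipschitz_on_def subset_iff)
    qed
    show "closed A" if A: "A \<in> (`) h ` \<A>" for A
    proof -
      obtain B where "B \<in> \<A>" "A = h ` B"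
        using A by blast
      then show ?thesis
        using compact lip_h by (metis compact_continuous_image compact_imp_closed lipschitz_on_continuous_on)
    qed
  qed (use assms(2) in simp)
  show ?thesis
    unfolding intrinsically_isometric_def
  proof (intro exI conjI ballI)
    show "bij_betw f T S"
      unfolding f_def by (rule bij_betw_inv_into[OF bij])
    fix u v assume "u \<in> T" "v \<in> T"
    then show "intrinsic_dist S (f u) (f v) = intrinsic_dist T u v"
      using f_le[of u v] h_le[of "f u" "f v"] h_f by (simp add: antisym)
  qed
qed

lemma frontier_injective_image_compact:
  fixes G :: "'a::euclidean_space \<Rightarrow> 'a"
  assumes "continuous_on UNIV G" "inj G" "compact K"
  shows "frontier (G ` K) = G ` frontier K"
proof -
  have "open (G ` interior K)"
    using continuous_on_subset[OF assms(1)] inj_on_subset[OF assms(2)]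
    by (intro invariance_of_domain) auto
  then have "G ` interior K \<subseteq> interior (G ` K)"
    by (simp add: interior_maximal image_mono interior_subset)
  moreover have "interior (G ` K) \<subseteq> G ` interior K"
    using assms(1,2) by (intro interior_image_subset) (auto simp: continuous_on_eq_continuous_at)
  moreover have "closed (G ` K)"
    using compact_continuous_image[OF continuous_on_subset[OF assms(1)] assms(3)]
    by (simp add: compact_imp_closed)
  ultimately have "frontier (G ` K) = G ` K - G ` interior K"
    by (simp add: frontier_def subset_antisym)
  also have "\<dots> = G ` frontier K"
    using assms(2) compact_imp_closed[OF assms(3)] by (simp add: frontier_def image_set_diff)
  finally show ?thesis .
qed

text \<open>The symmetry group of the cube acts on \<open>\<real>\<^sup>3\<close> by signed permutations of the coordinates,
  and \<open>chamber\<close> below is a fundamental domain of this action.\<close>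

definition signed_perm :: "(3 \<Rightarrow> 3) \<Rightarrow> (3 \<Rightarrow> bool) \<Rightarrow> real^3 \<Rightarrow> real^3" where
  "signed_perm p s x = (\<chi> i. if s i then - (x $ p i) else x $ p i)"

lemma signed_perm_nth [simp]: "signed_perm p s x $ i = (if s i then - (x $ p i) else x $ p i)"
  by (simp add: signed_perm_def)

lemma signed_perm_id: "signed_perm id (\<lambda>_. False) x = x"
  by (simp add: vec_eq_iff)

lemma signed_perm_inverse: "bij p \<Longrightarrow> signed_perm (inv p) (s \<circ> inv p) (signed_perm p s x) = x"
  by (simp add: vec_eq_iff bij_is_surj surj_f_inv_f)

lemma inj_signed_perm: "bij p \<Longrightarrow> inj (signed_perm p s)"
  by (metis injI signed_perm_inverse)

lemma linear_signed_perm: "linear (signed_perm p s)"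
  by (rule linearI) (auto simp: vec_eq_iff)

lemma inner_signed_perm:
  assumes "bij p"
  shows "signed_perm p s x \<bullet> signed_perm p s y = x \<bullet> y"
proof -
  have "signed_perm p s x \<bullet> signed_perm p s y = (\<Sum>i\<in>UNIV. x $ p i * y $ p i)"
    unfolding inner_vec_def by (rule sum.cong) auto
  also have "\<dots> = x \<bullet> y"
    using sum.reindex_bij_betw[of p UNIV UNIV "\<lambda>i. x $ i * y $ i"] assms
    by (simp add: bij_betw_def inner_vec_def)
  finally show ?thesis .
qed

lemma norm_signed_perm: "bij p \<Longrightarrow> norm (signed_perm p s x) = norm x"
  by (simp add: norm_eq_sqrt_inner inner_signed_perm)

lemma orthogonal_transformation_signed_perm: "bij p \<Longrightarrow> orthogonal_transformation (signed_perm p s)"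
  by (simp add: orthogonal_transformation_def linear_signed_perm inner_signed_perm)

definition chamber :: "(real^3) set" where
  "chamber = {y. 0 \<le> y $ 1 \<and> y $ 1 \<le> y $ 2 \<and> y $ 2 \<le> y $ 3}"

lemma chamber_nonneg: "y \<in> chamber \<Longrightarrow> 0 \<le> y $ i"
  using exhaust_3[of i] by (auto simp: chamber_def)

lemma chamber_bounds: "y \<in> chamber \<Longrightarrow> y $ 1 \<le> y $ i \<and> y $ i \<le> y $ 3"
  using exhaust_3[of i] by (auto simp: chamber_def)

lemma closed_chamber: "closed chamber"
  unfolding chamber_def by (intro closed_Collect_conj closed_Collect_le continuous_intros)

lemma chamber_permute_eq:
  assumes y: "y \<in> chamber" and y': "y' \<in> chamber" and "bij \<pi>" and perm: "\<And>k. y' $ k = y $ \<pi> k"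
  shows "y' = y"
proof -
  have \<pi>_inv: "\<pi> (inv \<pi> k) = k" for k
    using \<open>bij \<pi>\<close> by (simp add: bij_is_surj surj_f_inv_f)
  have min: "y' $ 1 = y $ 1"
    using perm[of 1] perm[of "inv \<pi> 1"] \<pi>_inv[of 1]
      chamber_bounds[OF y, of "\<pi> 1"] chamber_bounds[OF y', of "inv \<pi> 1"]
    by auto
  have max: "y' $ 3 = y $ 3"
    using perm[of 3] perm[of "inv \<pi> 3"] \<pi>_inv[of 3]
      chamber_bounds[OF y, of "\<pi> 3"] chamber_bounds[OF y', of "inv \<pi> 3"]
    by auto
  have "(\<Sum>k\<in>UNIV. y' $ k) = (\<Sum>k\<in>UNIV. y $ \<pi> k)"
    using perm by simp
  also have "\<dots> = (\<Sum>k\<in>UNIV. y $ k)"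
    using sum.reindex_bij_betw[of \<pi> UNIV UNIV "\<lambda>k. y $ k"] \<open>bij \<pi>\<close> by (simp add: bij_betw_def)
  finally have "y' $ 2 = y $ 2"
    using min max by (simp add: sum_3)
  then show ?thesis
    using min max by (simp add: vec_eq_iff forall_3)
qed

lemma signed_perm_eq_nonneg:
  assumes "\<And>i. 0 \<le> y $ i" "\<And>i. 0 \<le> y' $ i" "signed_perm p s y = signed_perm q t y'"
  shows "y $ p i = y' $ q i" "s i \<noteq> t i \<Longrightarrow> y $ p i = 0"
proof -
  have "(if s i then - (y $ p i) else y $ p i) = (if t i then - (y' $ q i) else y' $ q i)"
    using assms(3) by (simp add: vec_eq_iff)
  then show "y $ p i = y' $ q i" "s i \<noteq> t i \<Longrightarrow> y $ p i = 0"
    using assms(1)[of "p i"] assms(2)[of "q i"] by (auto split: if_splits)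
qed

lemma signed_perm_chamber_unique:
  assumes "y \<in> chamber" "y' \<in> chamber" "bij p" "bij q" "signed_perm p s y = signed_perm q t y'"
  shows "y' = y"
proof (rule chamber_permute_eq[OF assms(1,2)])
  show "bij (p \<circ> inv q)"
    using assms(3,4) by (simp add: bij_comp bij_imp_bij_inv)
  show "y' $ k = y $ (p \<circ> inv q) k" for k
    using signed_perm_eq_nonneg(1)[OF chamber_nonneg chamber_nonneg assms(5), of "inv q k"] assms
    by (simp add: bij_is_surj surj_f_inv_f)
qed

definition perm3 :: "3 \<Rightarrow> 3 \<Rightarrow> 3 \<Rightarrow> 3 \<Rightarrow> 3" where
  "perm3 a b c = (\<lambda>i. if i = 1 then a else if i = 2 then b else c)"

lemma bij_perm3:
  assumes "a \<noteq> b" "a \<noteq> c" "b \<noteq> c"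
  shows "bij (perm3 a b c)"
proof -
  have "inj (perm3 a b c)"
  proof (rule injI)
    fix i j assume "perm3 a b c i = perm3 a b c j"
    then show "i = j"
      using assms exhaust_3[of i] exhaust_3[of j] by (auto simp: perm3_def)
  qed
  then show ?thesis
    by (simp add: bij_def finite_UNIV_inj_surj)
qed

lemma exists_sorting_perm:
  fixes f :: "3 \<Rightarrow> real"
  shows "\<exists>q :: 3 \<Rightarrow> 3. bij q \<and> f (q 1) \<le> f (q 2) \<and> f (q 2) \<le> f (q 3)"
proof -
  consider "f 1 \<le> f 2" "f 2 \<le> f 3" | "f 1 \<le> f 3" "f 3 \<le> f 2" | "f 2 \<le> f 1" "f 1 \<le> f 3"
    | "f 2 \<le> f 3" "f 3 \<le> f 1" | "f 3 \<le> f 1" "f 1 \<le> f 2" | "f 3 \<le> f 2" "f 2 \<le> f 1"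
    by linarith
  then show ?thesis
  proof cases
    case 1 then show ?thesis by (intro exI[of _ "perm3 1 2 3"] conjI bij_perm3) (simp_all add: perm3_def)
  next
    case 2 then show ?thesis by (intro exI[of _ "perm3 1 3 2"] conjI bij_perm3) (simp_all add: perm3_def)
  next
    case 3 then show ?thesis by (intro exI[of _ "perm3 2 1 3"] conjI bij_perm3) (simp_all add: perm3_def)
  next
    case 4 then show ?thesis by (intro exI[of _ "perm3 2 3 1"] conjI bij_perm3) (simp_all add: perm3_def)
  next
    case 5 then show ?thesis by (intro exI[of _ "perm3 3 1 2"] conjI bij_perm3) (simp_all add: perm3_def)
  next
    case 6 then show ?thesis by (intro exI[of _ "perm3 3 2 1"] conjI bij_perm3) (simp_all add: perm3_def)
  qed
qed

lemma chamber_orbit_representative: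
  fixes x :: "real^3"
  obtains p s y where "bij p" "y \<in> chamber" "x = signed_perm p s y"
proof -
  obtain q :: "3 \<Rightarrow> 3" where q: "bij q" "\<bar>x $ q 1\<bar> \<le> \<bar>x $ q 2\<bar>" "\<bar>x $ q 2\<bar> \<le> \<bar>x $ q 3\<bar>"
    using exists_sorting_perm[of "\<lambda>i. \<bar>x $ i\<bar>"] by blast
  define y where "y = (\<chi> k. \<bar>x $ q k\<bar>)"
  have "y \<in> chamber"
    using q by (simp add: chamber_def y_def)
  moreover have "bij (inv q)"
    using q by (simp add: bij_imp_bij_inv)
  moreover have "x = signed_perm (inv q) (\<lambda>i. x $ i < 0) y"
    using q by (simp add: vec_eq_iff y_def bij_is_surj surj_f_inv_f)
  ultimately show ?thesis
    using that by blast
qed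

definition ties_preserved :: "real^3 \<Rightarrow> real^3 \<Rightarrow> bool" where
  "ties_preserved y z \<longleftrightarrow> (\<forall>a b. y $ a = y $ b \<longrightarrow> z $ a = z $ b) \<and> (\<forall>a. y $ a = 0 \<longrightarrow> z $ a = 0)"

text \<open>In the chamber every coincidence or vanishing of coordinates is generated by the three
  walls \<open>y\<^sub>1 = 0\<close>, \<open>y\<^sub>1 = y\<^sub>2\<close> and \<open>y\<^sub>2 = y\<^sub>3\<close>.\<close>

lemma ties_preserved_chamber:
  assumes "y \<in> chamber" "z \<in> chamber"
    and e1: "y $ 1 = 0 \<longleftrightarrow> z $ 1 = 0" and e2: "y $ 1 = y $ 2 \<longleftrightarrow> z $ 1 = z $ 2"
    and e3: "y $ 2 = y $ 3 \<longleftrightarrow> z $ 2 = z $ 3"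
  shows "ties_preserved y z"
proof -
  have walls: "w $ 1 = w $ 3 \<longleftrightarrow> w $ 1 = w $ 2 \<and> w $ 2 = w $ 3"
      "w $ 2 = 0 \<longleftrightarrow> w $ 1 = 0 \<and> w $ 1 = w $ 2"
      "w $ 3 = 0 \<longleftrightarrow> w $ 1 = 0 \<and> w $ 1 = w $ 2 \<and> w $ 2 = w $ 3" if "w \<in> chamber" for w
    using that unfolding chamber_def by auto
  note y13 = walls(1)[OF assms(1)] and y2 = walls(2)[OF assms(1)] and y3 = walls(3)[OF assms(1)]
  note z13 = walls(1)[OF assms(2)] and z2 = walls(2)[OF assms(2)] and z3 = walls(3)[OF assms(2)]
  have A13: "y $ 1 = y $ 3 \<longleftrightarrow> z $ 1 = z $ 3" using y13 z13 e2 e3 by blast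
  have e2': "y $ 2 = y $ 1 \<longleftrightarrow> z $ 2 = z $ 1" using e2 by (simp add: eq_commute)
  have e3': "y $ 3 = y $ 2 \<longleftrightarrow> z $ 3 = z $ 2" using e3 by (simp add: eq_commute)
  have A13': "y $ 3 = y $ 1 \<longleftrightarrow> z $ 3 = z $ 1" using A13 by (simp add: eq_commute)
  have A: "y $ a = y $ b \<longleftrightarrow> z $ a = z $ b" for a b
    using exhaust_3[of a] exhaust_3[of b]
    by (elim disjE) (simp_all only: e2 e3 A13 e2' e3' A13' simp_thms)
  have B: "y $ a = 0 \<longleftrightarrow> z $ a = 0" for a
    using exhaust_3[of a] by (elim disjE) (simp_all only: e1 e2 e3 y2 z2 y3 z3 simp_thms)
  show ?thesis unfolding ties_preserved_def using A B by auto
qed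

lemma signed_perm_stabilizer:
  assumes "y \<in> chamber" "signed_perm p s y = signed_perm q t y" "ties_preserved y z"
  shows "signed_perm p s z = signed_perm q t z"
proof -
  note eq = signed_perm_eq_nonneg[OF chamber_nonneg[OF assms(1)] chamber_nonneg[OF assms(1)] assms(2)]
  have "z $ p i = z $ q i" for i
    using eq(1)[of i] assms(3) unfolding ties_preserved_def by blast
  moreover have "s i \<noteq> t i \<Longrightarrow> z $ p i = 0" for i
    using eq(2)[of i] assms(3) unfolding ties_preserved_def by blast
  ultimately show ?thesis
    by (auto simp: vec_eq_iff)
qed

lemma linear_imp_continuous_on: "linear f \<Longrightarrow> continuous_on S (f :: real^3 \<Rightarrow> real^3)"
  by (simp add: linear_continuous_on linear_conv_bounded_linear)

lemma continuous_on_signed_perm: "continuous_on S (signed_perm p s)"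
  by (rule linear_imp_continuous_on[OF linear_signed_perm])

text \<open>The map on the chamber is linear on each of three cones over the triangle
  \<open>0 \<le> y\<^sub>1 \<le> y\<^sub>2 \<le> y\<^sub>3 = 1/2\<close>; each \<open>chamber_lin k\<close> is determined by where it sends the
  vertices of the cube's tetrahedra lying in that cone (see \<open>cube_tetra\<close> and \<open>poly_tetra\<close> below).\<close>

definition chamber_lin1 :: "real^3 \<Rightarrow> real^3" where
  "chamber_lin1 y = vector [y$1, y$2, 14/11 * y$3]"

definition chamber_lin2 :: "real^3 \<Rightarrow> real^3" where
  "chamber_lin2 y = vector [y$1, 15/17*y$2 + 5/187*y$3, -8/17*y$2 + 258/187*y$3]"

definition chamber_lin3 :: "real^3 \<Rightarrow> real^3" where
  "chamber_lin3 y = vector [7/9*y$1 + 28/153*y$2 + 5/561*y$3, 4/9*y$1 + 79/153*y$2 + 5/561*y$3,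
                            4/9*y$1 - 128/153*y$2 + 764/561*y$3]"

definition chamber_map :: "real^3 \<Rightarrow> real^3" where
  "chamber_map y = (if 22*y$2 \<le> 5*y$3 then chamber_lin1 y
     else if 374*y$1 \<le> 308*y$2 + 15*y$3 then chamber_lin2 y else chamber_lin3 y)"

definition chamber_lin_inv1 :: "real^3 \<Rightarrow> real^3" where
  "chamber_lin_inv1 z = vector [z$1, z$2, 11/14*z$3]"

definition chamber_lin_inv2 :: "real^3 \<Rightarrow> real^3" where
  "chamber_lin_inv2 z = vector [z$1, 129/115*z$2 - 1/46*z$3, 44/115*z$2 + 33/46*z$3]"

definition chamber_lin_inv3 :: "real^3 \<Rightarrow> real^3" where
  "chamber_lin_inv3 z = vector [13/8*z$1 - 27/46*z$2 - 5/736*z$3, -11/8*z$1 + 111/46*z$2 - 5/736*z$3,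
                                -11/8*z$1 + 77/46*z$2 + 539/736*z$3]"

definition chamber_map_inv :: "real^3 \<Rightarrow> real^3" where
  "chamber_map_inv z = (if 28*z$2 \<le> 5*z$3 then chamber_lin_inv1 z
     else if 460*z$1 \<le> 432*z$2 + 5*z$3 then chamber_lin_inv2 z else chamber_lin_inv3 z)"

lemmas chamber_lin_defs =
  chamber_lin1_def chamber_lin2_def chamber_lin3_def
  chamber_lin_inv1_def chamber_lin_inv2_def chamber_lin_inv3_def

lemma chamber_map_in_chamber: "y \<in> chamber \<Longrightarrow> chamber_map y \<in> chamber"
  unfolding chamber_map_def chamber_def chamber_lin_defs by (auto simp: vector_3)

lemma chamber_map_walls:
  assumes "y \<in> chamber"
  shows "y $ 1 = 0 \<longleftrightarrow> chamber_map y $ 1 = 0"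
    and "y $ 1 = y $ 2 \<longleftrightarrow> chamber_map y $ 1 = chamber_map y $ 2"
    and "y $ 2 = y $ 3 \<longleftrightarrow> chamber_map y $ 2 = chamber_map y $ 3"
  using assms unfolding chamber_map_def chamber_def chamber_lin_defs by (auto simp: vector_3)

lemma ties_preserved_chamber_map:
  assumes "y \<in> chamber"
  shows "ties_preserved y (chamber_map y)" "ties_preserved (chamber_map y) y"
proof -
  note walls = chamber_map_walls[OF assms]
  show "ties_preserved y (chamber_map y)"
    by (rule ties_preserved_chamber[OF assms chamber_map_in_chamber[OF assms] walls])
  show "ties_preserved (chamber_map y) y"
    by (rule ties_preserved_chamber[OF chamber_map_in_chamber[OF assms] assms walls[symmetric]])
qed

lemma chamber_lin_inv_chamber_lin:
  "chamber_lin_inv1 (chamber_lin1 y) = y"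
  "chamber_lin_inv2 (chamber_lin2 y) = y"
  "chamber_lin_inv3 (chamber_lin3 y) = y"
  unfolding chamber_lin_defs by (simp_all add: vec_eq_iff forall_3 field_simps)

lemma chamber_map_inv_chamber_map:
  assumes "y \<in> chamber"
  shows "chamber_map_inv (chamber_map y) = y"
proof -
  consider "22*y$2 \<le> 5*y$3" | "\<not> 22*y$2 \<le> 5*y$3" "374*y$1 \<le> 308*y$2 + 15*y$3"
    | "\<not> 22*y$2 \<le> 5*y$3" "\<not> 374*y$1 \<le> 308*y$2 + 15*y$3"
    by blast
  then show ?thesis
  proof cases
    case 1
    then have "28 * chamber_lin1 y $ 2 \<le> 5 * chamber_lin1 y $ 3"
      by (simp add: chamber_lin1_def)
    then show ?thesis
      using 1 by (simp add: chamber_map_def chamber_map_inv_def chamber_lin_inv_chamber_lin)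
  next
    case 2
    then have "\<not> 28 * chamber_lin2 y $ 2 \<le> 5 * chamber_lin2 y $ 3"
      "460 * chamber_lin2 y $ 1 \<le> 432 * chamber_lin2 y $ 2 + 5 * chamber_lin2 y $ 3"
      by (simp_all add: chamber_lin2_def)
    then show ?thesis
      using 2 by (simp add: chamber_map_def chamber_map_inv_def chamber_lin_inv_chamber_lin)
  next
    case 3
    then have "\<not> 28 * chamber_lin3 y $ 2 \<le> 5 * chamber_lin3 y $ 3"
      "\<not> 460 * chamber_lin3 y $ 1 \<le> 432 * chamber_lin3 y $ 2 + 5 * chamber_lin3 y $ 3"
      using assms by (simp_all add: chamber_lin3_def chamber_def)
    then show ?thesis
      using 3 by (simp add: chamber_map_def chamber_map_inv_def chamber_lin_inv_chamber_lin)
  qed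
qed

lemma chamber_map_inj: "y \<in> chamber \<Longrightarrow> y' \<in> chamber \<Longrightarrow> chamber_map y = chamber_map y' \<Longrightarrow> y = y'"
  by (metis chamber_map_inv_chamber_map)

lemma linear_chamber_lin: "linear chamber_lin1" "linear chamber_lin2" "linear chamber_lin3"
  by (rule linearI; simp add: chamber_lin_defs vec_eq_iff forall_3 field_simps)+

definition chamber_part1 :: "(real^3) set" where
  "chamber_part1 = chamber \<inter> {y. 22*y$2 \<le> 5*y$3}"

definition chamber_part2 :: "(real^3) set" where
  "chamber_part2 = chamber \<inter> {y. 5*y$3 \<le> 22*y$2 \<and> 374*y$1 \<le> 308*y$2 + 15*y$3}"

definition chamber_part3 :: "(real^3) set" where
  "chamber_part3 = chamber \<inter> {y. 5*y$3 \<le> 22*y$2 \<and> 308*y$2 + 15*y$3 \<le> 374*y$1}"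

lemma chamber_eq_parts: "chamber = chamber_part1 \<union> chamber_part2 \<union> chamber_part3"
  by (auto simp: chamber_part1_def chamber_part2_def chamber_part3_def)

lemma closed_chamber_parts: "closed chamber_part1" "closed chamber_part2" "closed chamber_part3"
  unfolding chamber_part1_def chamber_part2_def chamber_part3_def
  by (intro closed_Int closed_chamber closed_Collect_conj closed_Collect_le continuous_intros)+

text \<open>On the common boundary of two parts the adjacent linear maps agree.\<close>

lemma chamber_map_part1: "y \<in> chamber_part1 \<Longrightarrow> chamber_map y = chamber_lin1 y"
  by (simp add: chamber_part1_def chamber_map_def)

lemma chamber_map_part2:
  assumes "y \<in> chamber_part2"
  shows "chamber_map y = chamber_lin2 y"
proof (cases "22*y$2 \<le> 5*y$3")
  case True
  then have "y$3 = 22/5*y$2"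
    using assms by (simp add: chamber_part2_def)
  then have "chamber_lin1 y = chamber_lin2 y"
    by (simp add: chamber_lin1_def chamber_lin2_def vec_eq_iff forall_3)
  then show ?thesis
    using True by (simp add: chamber_map_def)
next
  case False
  then show ?thesis
    using assms by (simp add: chamber_map_def chamber_part2_def)
qed

lemma chamber_map_part3:
  assumes "y \<in> chamber_part3"
  shows "chamber_map y = chamber_lin3 y"
proof (cases "22*y$2 \<le> 5*y$3")
  case True
  then have "y$1 = y$2" "y$3 = 22/5*y$2"
    using assms by (auto simp: chamber_part3_def chamber_def)
  then have "chamber_lin1 y = chamber_lin3 y"
    by (simp add: chamber_lin1_def chamber_lin3_def vec_eq_iff forall_3)
  then show ?thesis
    using True by (simp add: chamber_map_def)
next
  case outside1: False
  show ?thesis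
  proof (cases "374*y$1 \<le> 308*y$2 + 15*y$3")
    case True
    then have "y$1 = 14/17*y$2 + 15/374*y$3"
      using assms by (auto simp: chamber_part3_def)
    then have "chamber_lin2 y = chamber_lin3 y"
      by (simp add: chamber_lin2_def chamber_lin3_def vec_eq_iff forall_3 field_simps)
    then show ?thesis
      using True outside1 by (simp add: chamber_map_def)
  next
    case False
    then show ?thesis
      using outside1 by (simp add: chamber_map_def)
  qed
qed

lemma continuous_on_chamber_map: "continuous_on chamber chamber_map"
proof -
  have "continuous_on chamber_part1 chamber_map"
    using linear_imp_continuous_on[OF linear_chamber_lin(1)]
    by (rule continuous_on_eq) (simp add: chamber_map_part1)
  moreover have "continuous_on chamber_part2 chamber_map"
    using linear_imp_continuous_on[OF linear_chamber_lin(2)]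
    by (rule continuous_on_eq) (simp add: chamber_map_part2)
  moreover have "continuous_on chamber_part3 chamber_map"
    using linear_imp_continuous_on[OF linear_chamber_lin(3)]
    by (rule continuous_on_eq) (simp add: chamber_map_part3)
  ultimately show ?thesis
    unfolding chamber_eq_parts using closed_chamber_parts
    by (intro continuous_on_closed_Un closed_Un) auto
qed

text \<open>The equivariant extension of \<open>chamber_map\<close> to all of \<open>\<real>\<^sup>3\<close>.  It is well defined because
  \<open>chamber_map\<close> preserves the walls of the chamber, hence the stabiliser of each point.\<close>

definition poly_map :: "real^3 \<Rightarrow> real^3" where
  "poly_map x = (SOME z. \<exists>p s y. bij p \<and> y \<in> chamber \<and> x = signed_perm p s y \<and>
     z = signed_perm p s (chamber_map y))"

lemma poly_map_signed_perm:
  assumes "bij p" "y \<in> chamber"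
  shows "poly_map (signed_perm p s y) = signed_perm p s (chamber_map y)"
proof -
  have "\<exists>p' s' y'. bij p' \<and> y' \<in> chamber \<and> signed_perm p s y = signed_perm p' s' y' \<and>
      poly_map (signed_perm p s y) = signed_perm p' s' (chamber_map y')"
    unfolding poly_map_def by (rule someI_ex) (use assms in blast)
  then obtain p' s' y' where rep: "bij p'" "y' \<in> chamber" "signed_perm p s y = signed_perm p' s' y'"
    and val: "poly_map (signed_perm p s y) = signed_perm p' s' (chamber_map y')"
    by blast
  have "y' = y"
    using signed_perm_chamber_unique[OF assms(2) rep(2) assms(1) rep(1,3)] .
  then have "signed_perm p s y = signed_perm p' s' y"
    using rep(3) by simp
  then have "signed_perm p s (chamber_map y) = signed_perm p' s' (chamber_map y)"
    by (rule signed_perm_stabilizer[OF assms(2) _ ties_preserved_chamber_map(1)[OF assms(2)]])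
  then show ?thesis
    using val \<open>y' = y\<close> by simp
qed

lemma poly_map_chamber: "y \<in> chamber \<Longrightarrow> poly_map y = chamber_map y"
  using poly_map_signed_perm[of id y "\<lambda>_. False"] by (simp add: signed_perm_id)

lemma inj_poly_map: "inj poly_map"
proof (rule injI)
  fix x x' assume eq: "poly_map x = poly_map x'"
  obtain p s y where x: "bij p" "y \<in> chamber" "x = signed_perm p s y"
    by (rule chamber_orbit_representative)
  obtain q t y' where x': "bij q" "y' \<in> chamber" "x' = signed_perm q t y'"
    by (rule chamber_orbit_representative)
  have images: "signed_perm p s (chamber_map y) = signed_perm q t (chamber_map y')"
    using eq x x' poly_map_signed_perm by simp
  have "y' = y"
    using signed_perm_chamber_unique[OF chamber_map_in_chamber[OF x(2)] chamber_map_in_chamber[OF x'(2)]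
        x(1) x'(1) images]
    by (rule chamber_map_inj[OF x'(2) x(2)])
  then have "signed_perm p s (chamber_map y) = signed_perm q t (chamber_map y)"
    using images by simp
  then have "signed_perm p s y = signed_perm q t y"
    by (rule signed_perm_stabilizer[OF chamber_map_in_chamber[OF x(2)] _ ties_preserved_chamber_map(2)[OF x(2)]])
  then show "x = x'"
    using x x' \<open>y' = y\<close> by simp
qed

definition signed_perms :: "((3 \<Rightarrow> 3) \<times> (3 \<Rightarrow> bool)) set" where
  "signed_perms = {(p, s). bij p}"

lemma finite_signed_perms: "finite signed_perms"
  by (rule finite_subset[OF subset_UNIV]) simp

lemma continuous_on_poly_map_signed_perm_chamber:
  assumes "bij p"
  shows "continuous_on (signed_perm p s ` chamber) poly_map"
proof -
  have "signed_perm (inv p) (s \<circ> inv p) ` signed_perm p s ` chamber = chamber"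
    using signed_perm_inverse[OF assms] by (force simp: image_iff)
  then have "continuous_on (signed_perm p s ` chamber)
      (signed_perm p s \<circ> chamber_map \<circ> signed_perm (inv p) (s \<circ> inv p))"
    using continuous_on_chamber_map by (intro continuous_on_compose continuous_on_signed_perm) simp_all
  then show ?thesis
  proof (rule continuous_on_eq)
    fix x assume "x \<in> signed_perm p s ` chamber"
    then obtain y where "y \<in> chamber" "x = signed_perm p s y"
      by blast
    then show "(signed_perm p s \<circ> chamber_map \<circ> signed_perm (inv p) (s \<circ> inv p)) x = poly_map x"
      using poly_map_signed_perm[OF assms] signed_perm_inverse[OF assms] by simp
  qed
qed

lemma continuous_poly_map: "continuous_on UNIV poly_map"
proof -
  have "continuous_on (\<Union>ps\<in>signed_perms. signed_perm (fst ps) (snd ps) ` chamber) poly_map"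
  proof (rule continuous_on_closed_Union[OF finite_signed_perms])
    fix ps assume "ps \<in> signed_perms"
    then obtain p s where ps: "ps = (p, s)" "bij p"
      by (cases ps) (auto simp: signed_perms_def)
    have "closed (signed_perm p s ` chamber)"
      using closed_chamber linear_signed_perm inj_signed_perm[OF ps(2)]
      by (rule closed_injective_linear_image)
    then show "closed (signed_perm (fst ps) (snd ps) ` chamber)"
      "continuous_on (signed_perm (fst ps) (snd ps) ` chamber) poly_map"
      using continuous_on_poly_map_signed_perm_chamber[OF ps(2)] ps(1) by simp_all
  qed
  moreover have "UNIV = (\<Union>ps\<in>signed_perms. signed_perm (fst ps) (snd ps) ` chamber)"
  proof (rule UNIV_eq_I)
    fix x
    obtain p s y where "bij p" "y \<in> chamber" "x = signed_perm p s y"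
      by (rule chamber_orbit_representative)
    then show "x \<in> (\<Union>ps\<in>signed_perms. signed_perm (fst ps) (snd ps) ` chamber)"
      unfolding signed_perms_def by (intro UN_I[of "(p, s)"]) auto
  qed
  ultimately show ?thesis
    by simp
qed

lemma Basis_real3: "(Basis :: (real^3) set) = {axis 1 1, axis 2 1, axis 3 1}"
  by (auto simp: Basis_vec_def) (metis exhaust_3)

definition simplex3 :: "(real^3) set" where
  "simplex3 = convex hull (insert 0 Basis)"

lemma mem_simplex3: "l \<in> simplex3 \<longleftrightarrow> 0 \<le> l$1 \<and> 0 \<le> l$2 \<and> 0 \<le> l$3 \<and> l$1 + l$2 + l$3 \<le> 1"
  unfolding simplex3_def std_simplex by (simp add: Basis_real3 inner_axis axis_eq_axis add.assoc)

lemma compact_simplex3: "compact simplex3"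
  unfolding simplex3_def by (intro finite_imp_compact_convex_hull) auto

lemma measure_simplex3: "measure lebesgue simplex3 = 1/6"
proof -
  have "measure lebesgue simplex3 = measure lborel simplex3"
    using compact_simplex3 by (intro measure_completion) (auto dest: compact_imp_closed)
  also have "\<dots> = 1/6"
    unfolding simplex3_def by (simp add: content_std_simplex fact_numeral)
  finally show ?thesis .
qed

lemma polytope_simplex3: "polytope simplex3"
  unfolding simplex3_def polytope_def by (intro exI[of _ "insert 0 Basis"]) auto

lemma aff_dim_simplex3: "aff_dim simplex3 = 3"
proof -
  have "interior simplex3 \<noteq> {}"
    unfolding simplex3_def using interior_std_simplex_nonempty by blast
  then show ?thesis
    by (simp add: aff_dim_nonempty_interior)
qed

definition column_matrix :: "real^3 \<Rightarrow> real^3 \<Rightarrow> real^3 \<Rightarrow> real^3^3" where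
  "column_matrix u v w = (\<chi> i k. if k = 1 then u$i else if k = 2 then v$i else w$i)"

lemma column_matrix_mult: "column_matrix u v w *v l = l$1 *\<^sub>R u + l$2 *\<^sub>R v + l$3 *\<^sub>R w"
  by (simp add: vec_eq_iff column_matrix_def matrix_vector_mult_def sum_3 algebra_simps)

lemma det_column_matrix:
  "det (column_matrix u v w) =
     u$1 * v$2 * w$3 + v$1 * w$2 * u$3 + w$1 * u$2 * v$3 - u$1 * w$2 * v$3 - v$1 * u$2 * w$3 - w$1 * v$2 * u$3"
  by (simp add: det_3 column_matrix_def)

text \<open>The part of the face \<open>y\<^sub>3 = 1/2\<close> of the cube lying in the chamber is the triangle with the
  face centre \<open>vc\<close>, the edge midpoint \<open>vm\<close> and the vertex \<open>vv\<close>; the points \<open>va\<close>, \<open>vd\<close>, \<open>vb\<close>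
  subdivide it into four triangles.  The points \<open>w\<close> are their images on the surface of \<open>P\<close>:
  the face centre moves outwards and the vertex inwards.\<close>

definition "vc = (vector [0, 0, 1/2] :: real^3)"
definition "va = (vector [0, 5/44, 1/2] :: real^3)"
definition "vd = (vector [5/44, 5/44, 1/2] :: real^3)"
definition "vm = (vector [0, 1/2, 1/2] :: real^3)"
definition "vb = (vector [19/44, 1/2, 1/2] :: real^3)"
definition "vv = (vector [1/2, 1/2, 1/2] :: real^3)"
definition "wc = (vector [0, 0, 7/11] :: real^3)"
definition "wa = (vector [0, 5/44, 7/11] :: real^3)"
definition "wd = (vector [5/44, 5/44, 7/11] :: real^3)"
definition "wm = (vector [0, 5/11, 5/11] :: real^3)"
definition "wb = (vector [19/44, 5/11, 5/11] :: real^3)"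
definition "wv = (vector [16/33, 16/33, 16/33] :: real^3)"

lemmas vertex_defs = vc_def va_def vd_def vm_def vb_def vv_def wc_def wa_def wd_def wm_def wb_def wv_def

text \<open>The tetrahedra spanned by the centre \<open>0\<close> and the four triangles are the images of
  \<open>simplex3\<close> under these matrices.\<close>

definition cube_tetra :: "nat \<Rightarrow> real^3^3" where
  "cube_tetra j = (if j = 1 then column_matrix vc vd va else if j = 2 then column_matrix va vb vm
     else if j = 3 then column_matrix va vd vb else column_matrix vd vv vb)"

definition poly_tetra :: "nat \<Rightarrow> real^3^3" where
  "poly_tetra j = (if j = 1 then column_matrix wc wd wa else if j = 2 then column_matrix wa wb wm
     else if j = 3 then column_matrix wa wd wb else column_matrix wd wv wb)"

definition tetra_idx :: "nat set" where
  "tetra_idx = {1, 2, 3, 4}"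

lemma cube_tetra_height: "(cube_tetra j *v l) $ 3 = (l$1 + l$2 + l$3) / 2"
  by (simp add: cube_tetra_def column_matrix_mult vertex_defs)

lemma chamber_map_cube_tetra:
  assumes "j \<in> tetra_idx" "l \<in> simplex3"
  shows "cube_tetra j *v l \<in> chamber" "chamber_map (cube_tetra j *v l) = poly_tetra j *v l"
proof -
  have parts: "cube_tetra 1 *v l \<in> chamber_part1" "cube_tetra 2 *v l \<in> chamber_part2"
    "cube_tetra 3 *v l \<in> chamber_part2" "cube_tetra 4 *v l \<in> chamber_part3"
    using assms(2) unfolding mem_simplex3
    by (simp_all add: cube_tetra_def column_matrix_mult vertex_defs chamber_part1_def chamber_part2_def
        chamber_part3_def chamber_def field_simps)
  have lins: "chamber_lin1 (cube_tetra 1 *v l) = poly_tetra 1 *v l"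
    "chamber_lin2 (cube_tetra 2 *v l) = poly_tetra 2 *v l"
    "chamber_lin2 (cube_tetra 3 *v l) = poly_tetra 3 *v l"
    "chamber_lin3 (cube_tetra 4 *v l) = poly_tetra 4 *v l"
    by (simp_all add: cube_tetra_def poly_tetra_def column_matrix_mult vertex_defs chamber_lin_defs
        vec_eq_iff forall_3 field_simps)
  have "j = 1 \<or> j = 2 \<or> j = 3 \<or> j = 4"
    using assms(1) by (simp add: tetra_idx_def)
  then show "cube_tetra j *v l \<in> chamber" "chamber_map (cube_tetra j *v l) = poly_tetra j *v l"
    using parts lins chamber_map_part1 chamber_map_part2 chamber_map_part3
    by (auto simp: chamber_part1_def chamber_part2_def chamber_part3_def)
qed

lemma chamber_cube_covered:
  assumes y: "y \<in> chamber" "y$3 \<le> 1/2"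
  obtains j l where "j \<in> tetra_idx" "l \<in> simplex3" "y = cube_tetra j *v l"
proof -
  consider "22*y$2 \<le> 5*y$3"
    | "\<not> 22*y$2 \<le> 5*y$3" "374*y$1 \<le> 308*y$2 + 15*y$3" "0 \<le> -374*y$1 + 418*y$2 - 95*y$3"
    | "\<not> 22*y$2 \<le> 5*y$3" "374*y$1 \<le> 308*y$2 + 15*y$3" "\<not> 0 \<le> -374*y$1 + 418*y$2 - 95*y$3"
    | "\<not> 22*y$2 \<le> 5*y$3" "\<not> 374*y$1 \<le> 308*y$2 + 15*y$3"
    by blast
  then show ?thesis
  proof cases
    case 1
    let ?l = "vector [2*y$3 - 44/5*y$2, 44/5*y$1, 44/5*y$2 - 44/5*y$1] :: real^3"
    have "?l \<in> simplex3"
      using 1 y unfolding mem_simplex3 chamber_def vector_3 mem_Collect_eq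
      by - (elim conjE, intro conjI; linarith)
    moreover have "y = cube_tetra 1 *v ?l"
      by (simp add: cube_tetra_def column_matrix_mult vertex_defs vec_eq_iff forall_3 field_simps)
    ultimately show ?thesis
      by (intro that) (auto simp: tetra_idx_def)
  next
    case 2
    let ?l = "vector [44/17*y$3 - 44/17*y$2, 44/19*y$1, -44/19*y$1 + 44/17*y$2 - 10/17*y$3] :: real^3"
    have "?l \<in> simplex3"
      using 2 y unfolding mem_simplex3 chamber_def vector_3 mem_Collect_eq
      by - (elim conjE, intro conjI; linarith)
    moreover have "y = cube_tetra 2 *v ?l"
      by (simp add: cube_tetra_def column_matrix_mult vertex_defs vec_eq_iff forall_3 field_simps)
    ultimately show ?thesis
      by (intro that) (auto simp: tetra_idx_def)
  next
    case 3
    let ?l = "vector [-44/5*y$1 + 616/85*y$2 + 6/17*y$3, 44/5*y$1 - 836/85*y$2 + 38/17*y$3,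
      44/17*y$2 - 10/17*y$3] :: real^3"
    have "?l \<in> simplex3"
      using 3 y unfolding mem_simplex3 chamber_def vector_3 mem_Collect_eq
      by - (elim conjE, intro conjI; linarith)
    moreover have "y = cube_tetra 3 *v ?l"
      by (simp add: cube_tetra_def column_matrix_mult vertex_defs vec_eq_iff forall_3 field_simps)
    ultimately show ?thesis
      by (intro that) (auto simp: tetra_idx_def)
  next
    case 4
    let ?l = "vector [44/17*y$3 - 44/17*y$2, 44/3*y$1 - 616/51*y$2 - 10/17*y$3, 44/3*y$2 - 44/3*y$1] :: real^3"
    have "?l \<in> simplex3"
      using 4 y unfolding mem_simplex3 chamber_def vector_3 mem_Collect_eq
      by - (elim conjE, intro conjI; linarith)
    moreover have "y = cube_tetra 4 *v ?l"
      by (simp add: cube_tetra_def column_matrix_mult vertex_defs vec_eq_iff forall_3 field_simps)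
    ultimately show ?thesis
      by (intro that) (auto simp: tetra_idx_def)
  qed
qed

lemma norm_eq_iff_sum_squares3:
  "norm (x::real^3) = norm (y::real^3) \<longleftrightarrow> x$1^2 + x$2^2 + x$3^2 = y$1^2 + y$2^2 + y$3^2"
proof -
  have "norm x = sqrt (x$1^2 + x$2^2 + x$3^2)" "norm y = sqrt (y$1^2 + y$2^2 + y$3^2)"
    by (simp_all add: norm_eq_sqrt_inner inner_vec_def sum_3 power2_eq_square)
  then show ?thesis
    by simp
qed

text \<open>Corresponding face triangles of the cube and of \<open>P\<close> are congruent.\<close>

lemma norm_poly_tetra_face:
  assumes "j \<in> tetra_idx" "w$1 + w$2 + w$3 = 0"
  shows "norm (poly_tetra j *v w) = norm (cube_tetra j *v w)"
proof -
  have w: "w$3 = - w$1 - w$2"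
    using assms(2) by simp
  show ?thesis
    using assms(1) unfolding norm_eq_iff_sum_squares3 tetra_idx_def
    by (auto simp: cube_tetra_def poly_tetra_def column_matrix_mult vertex_defs w power2_eq_square field_simps)
qed

lemma det_cube_tetra:
  "det (cube_tetra 1) = 25/3872" "det (cube_tetra 2) = 323/3872"
  "det (cube_tetra 3) = 85/3872" "det (cube_tetra 4) = 51/3872"
  by (simp_all add: cube_tetra_def det_column_matrix vertex_defs)

lemma det_poly_tetra:
  "det (poly_tetra 1) = 175/21296" "det (poly_tetra 2) = 2185/21296"
  "det (poly_tetra 3) = 575/21296" "det (poly_tetra 4) = 23/3993"
  by (simp_all add: poly_tetra_def det_column_matrix vertex_defs)

definition cube_centre :: "real^3" where
  "cube_centre = vec (1/2)"

definition centred_cube :: "(real^3) set" where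
  "centred_cube = cbox (- cube_centre) cube_centre"

lemma mem_box_centred_cube:
  "((- cube_centre) $ i \<le> x $ i \<and> x $ i \<le> cube_centre $ i) \<longleftrightarrow> \<bar>x$i\<bar> \<le> 1/2"
  "((- cube_centre) $ i < x $ i \<and> x $ i < cube_centre $ i) \<longleftrightarrow> \<bar>x$i\<bar> < 1/2"
  by (auto simp: cube_centre_def)

lemma mem_centred_cube: "x \<in> centred_cube \<longleftrightarrow> (\<forall>i. \<bar>x$i\<bar> \<le> 1/2)"
  by (simp only: centred_cube_def mem_box_cart mem_box_centred_cube)

lemma frontier_centred_cube: "frontier centred_cube = {x. (\<forall>i. \<bar>x$i\<bar> \<le> 1/2) \<and> (\<exists>i. \<bar>x$i\<bar> = 1/2)}"
proof -
  have "x \<in> frontier centred_cube \<longleftrightarrow> (\<forall>i. \<bar>x$i\<bar> \<le> 1/2) \<and> \<not> (\<forall>i. \<bar>x$i\<bar> < 1/2)" for x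
    unfolding centred_cube_def frontier_cbox Diff_iff mem_box_cart mem_box_centred_cube ..
  moreover have "(\<forall>i. a i \<le> h) \<and> \<not> (\<forall>i. a i < h) \<longleftrightarrow> (\<forall>i. a i \<le> h) \<and> (\<exists>i. a i = h)"
    for a :: "3 \<Rightarrow> real" and h
    by (auto simp: not_less intro: antisym)
  ultimately show ?thesis
    by (simp only: mem_Collect_eq set_eq_iff simp_thms)
qed

lemma signed_perm_mem_frontier_centred_cube:
  assumes "bij p"
  shows "signed_perm p s y \<in> centred_cube \<longleftrightarrow> y \<in> centred_cube"
    and "signed_perm p s y \<in> frontier centred_cube \<longleftrightarrow> y \<in> frontier centred_cube"
proof -
  have "(\<forall>i. \<bar>y $ p i\<bar> \<le> 1/2) \<longleftrightarrow> (\<forall>k. \<bar>y $ k\<bar> \<le> 1/2)"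
    "(\<exists>i. \<bar>y $ p i\<bar> = 1/2) \<longleftrightarrow> (\<exists>k. \<bar>y $ k\<bar> = 1/2)"
    using assms by (metis bij_is_surj surj_f_inv_f)+
  then show "signed_perm p s y \<in> centred_cube \<longleftrightarrow> y \<in> centred_cube"
    "signed_perm p s y \<in> frontier centred_cube \<longleftrightarrow> y \<in> frontier centred_cube"
    by (simp_all add: mem_centred_cube frontier_centred_cube)
qed

lemma chamber_mem_centred_cube:
  assumes "y \<in> chamber"
  shows "y \<in> centred_cube \<longleftrightarrow> y$3 \<le> 1/2"
    and "y \<in> frontier centred_cube \<longleftrightarrow> y$3 = 1/2"
proof -
  have abs_eq: "\<bar>y$i\<bar> = y$i" and le_top: "y$i \<le> y$3" for i
    using chamber_nonneg[OF assms] chamber_bounds[OF assms] by auto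
  show "y \<in> centred_cube \<longleftrightarrow> y$3 \<le> 1/2"
    unfolding mem_centred_cube abs_eq using le_top order_trans by blast
  show "y \<in> frontier centred_cube \<longleftrightarrow> y$3 = 1/2"
  proof
    assume "y \<in> frontier centred_cube"
    then have "\<forall>i. y$i \<le> 1/2" "\<exists>i. y$i = 1/2"
      unfolding frontier_centred_cube using abs_eq by auto
    then show "y$3 = 1/2"
      using le_top by (metis order_antisym)
  next
    assume top: "y$3 = 1/2"
    have "\<bar>y$i\<bar> \<le> 1/2" for i
      using abs_eq[of i] le_top[of i] top by simp
    moreover have "\<bar>y$3\<bar> = 1/2"
      using abs_eq top by simp
    ultimately show "y \<in> frontier centred_cube"
      unfolding frontier_centred_cube by blast
  qed
qed

definition tetra_labels :: "(((3 \<Rightarrow> 3) \<times> (3 \<Rightarrow> bool)) \<times> nat) set" where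
  "tetra_labels = signed_perms \<times> tetra_idx"

lemma finite_tetra_labels: "finite tetra_labels"
  unfolding tetra_labels_def tetra_idx_def using finite_signed_perms by simp

lemma tetra_labelsE:
  assumes "i \<in> tetra_labels"
  obtains p s j where "i = ((p, s), j)" "bij p" "j \<in> tetra_idx"
  using assms by (auto simp: tetra_labels_def signed_perms_def)

fun cube_tetrahedron :: "((3 \<Rightarrow> 3) \<times> (3 \<Rightarrow> bool)) \<times> nat \<Rightarrow> (real^3) set" where
  "cube_tetrahedron ((p, s), j) = (signed_perm p s \<circ> (*v) (cube_tetra j)) ` simplex3"

fun poly_tetrahedron :: "((3 \<Rightarrow> 3) \<times> (3 \<Rightarrow> bool)) \<times> nat \<Rightarrow> (real^3) set" where
  "poly_tetrahedron ((p, s), j) = (signed_perm p s \<circ> (*v) (poly_tetra j)) ` simplex3"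

fun face_triangle :: "((3 \<Rightarrow> 3) \<times> (3 \<Rightarrow> bool)) \<times> nat \<Rightarrow> (real^3) set" where
  "face_triangle ((p, s), j) = (signed_perm p s \<circ> (*v) (cube_tetra j)) ` (simplex3 \<inter> {l. l$1 + l$2 + l$3 = 1})"

lemma centred_cube_decompose:
  assumes "x \<in> centred_cube"
  obtains p s j l where "bij p" "j \<in> tetra_idx" "l \<in> simplex3" "x = signed_perm p s (cube_tetra j *v l)"
proof -
  obtain p s y where rep: "bij p" "y \<in> chamber" "x = signed_perm p s y"
    by (rule chamber_orbit_representative)
  then have "y$3 \<le> 1/2"
    using assms signed_perm_mem_frontier_centred_cube(1) chamber_mem_centred_cube(1) by simp
  then obtain j l where "j \<in> tetra_idx" "l \<in> simplex3" "y = cube_tetra j *v l"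
    by (rule chamber_cube_covered[OF rep(2)])
  then show ?thesis
    using that rep by blast
qed

lemma signed_perm_cube_tetra_mem:
  assumes "bij p" "j \<in> tetra_idx" "l \<in> simplex3"
  shows "signed_perm p s (cube_tetra j *v l) \<in> centred_cube"
    and "signed_perm p s (cube_tetra j *v l) \<in> frontier centred_cube \<longleftrightarrow> l$1 + l$2 + l$3 = 1"
  using chamber_map_cube_tetra(1)[OF assms(2,3)] assms(3)
  by (auto simp: signed_perm_mem_frontier_centred_cube[OF assms(1)] chamber_mem_centred_cube
      cube_tetra_height mem_simplex3)

lemma poly_map_cube_tetra:
  assumes "bij p" "j \<in> tetra_idx" "l \<in> simplex3"
  shows "poly_map (signed_perm p s (cube_tetra j *v l)) = signed_perm p s (poly_tetra j *v l)"
  using assms by (simp add: poly_map_signed_perm chamber_map_cube_tetra)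

lemma centred_cube_eq_Union: "centred_cube = \<Union> (cube_tetrahedron ` tetra_labels)"
proof (intro equalityI subsetI)
  fix x assume "x \<in> centred_cube"
  then obtain p s j l where "bij p" "j \<in> tetra_idx" "l \<in> simplex3" "x = signed_perm p s (cube_tetra j *v l)"
    by (rule centred_cube_decompose)
  then show "x \<in> \<Union> (cube_tetrahedron ` tetra_labels)"
    by (intro UN_I[of "((p, s), j)"]) (auto simp: tetra_labels_def signed_perms_def)
next
  fix x assume "x \<in> \<Union> (cube_tetrahedron ` tetra_labels)"
  then obtain i where "i \<in> tetra_labels" "x \<in> cube_tetrahedron i"
    by blast
  then show "x \<in> centred_cube"
    by (auto elim!: tetra_labelsE simp: signed_perm_cube_tetra_mem)
qed

lemma frontier_centred_cube_eq_Union: "frontier centred_cube = \<Union> (face_triangle ` tetra_labels)"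
proof (intro equalityI subsetI)
  fix x assume x: "x \<in> frontier centred_cube"
  then have "x \<in> centred_cube"
    by (simp add: centred_cube_def frontier_def)
  then obtain p s j l where *: "bij p" "j \<in> tetra_idx" "l \<in> simplex3" "x = signed_perm p s (cube_tetra j *v l)"
    by (rule centred_cube_decompose)
  then have "l$1 + l$2 + l$3 = 1"
    using x signed_perm_cube_tetra_mem(2) by simp
  then show "x \<in> \<Union> (face_triangle ` tetra_labels)"
    using * by (intro UN_I[of "((p, s), j)"]) (auto simp: tetra_labels_def signed_perms_def)
next
  fix x assume "x \<in> \<Union> (face_triangle ` tetra_labels)"
  then obtain i where "i \<in> tetra_labels" "x \<in> face_triangle i"
    by blast
  then show "x \<in> frontier centred_cube"
    by (auto elim!: tetra_labelsE simp: signed_perm_cube_tetra_mem)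
qed

lemma poly_map_centred_cube: "poly_map ` centred_cube = \<Union> (poly_tetrahedron ` tetra_labels)"
proof -
  have "poly_map ` cube_tetrahedron i = poly_tetrahedron i" if lab: "i \<in> tetra_labels" for i
  proof -
    obtain p s j where i: "i = ((p, s), j)" "bij p" "j \<in> tetra_idx"
      using lab by (rule tetra_labelsE)
    have "poly_map ` cube_tetrahedron i = (poly_map \<circ> signed_perm p s \<circ> (*v) (cube_tetra j)) ` simplex3"
      by (simp add: i image_comp comp_assoc)
    also have "\<dots> = poly_tetrahedron i"
      unfolding i cube_tetrahedron.simps poly_tetrahedron.simps
      by (rule image_cong) (simp_all add: poly_map_cube_tetra i)
    finally show ?thesis .
  qed
  then show ?thesis
    unfolding centred_cube_eq_Union image_UN by simp
qed

lemma poly_map_isometric_on_face_triangle: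
  assumes "i \<in> tetra_labels" "x \<in> face_triangle i" "y \<in> face_triangle i"
  shows "dist (poly_map x) (poly_map y) = dist x y"
proof -
  obtain p s j where i: "i = ((p, s), j)" "bij p" "j \<in> tetra_idx"
    using assms(1) by (rule tetra_labelsE)
  obtain l where l: "l \<in> simplex3" "l$1 + l$2 + l$3 = 1" "x = signed_perm p s (cube_tetra j *v l)"
    using assms(2) i by auto
  obtain m where m: "m \<in> simplex3" "m$1 + m$2 + m$3 = 1" "y = signed_perm p s (cube_tetra j *v m)"
    using assms(3) i by auto
  have "(l - m)$1 + (l - m)$2 + (l - m)$3 = 0"
    using l m by simp
  then have "norm (poly_tetra j *v (l - m)) = norm (cube_tetra j *v (l - m))"
    by (rule norm_poly_tetra_face[OF i(3)])
  then show ?thesis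
    using l m i poly_map_cube_tetra
    by (simp add: dist_norm linear_diff[OF linear_signed_perm, symmetric] norm_signed_perm
        matrix_vector_mult_diff_distrib)
qed

lemma linear_signed_perm_matrix: "linear (signed_perm p s \<circ> (*v) (A :: real^3^3))"
  by (intro linear_compose matrix_vector_mul_linear linear_signed_perm)

lemma compact_signed_perm_linear_image:
  "compact S \<Longrightarrow> compact ((signed_perm p s \<circ> (*v) (A :: real^3^3)) ` S)"
  by (rule compact_continuous_image[OF linear_imp_continuous_on[OF linear_signed_perm_matrix]])

lemma measure_signed_perm_linear_simplex3:
  assumes "bij p"
  shows "measure lebesgue ((signed_perm p s \<circ> (*v) A) ` simplex3) = \<bar>det A\<bar> / 6"
proof -
  have "measure lebesgue ((signed_perm p s \<circ> (*v) A) ` simplex3) = measure lebesgue ((*v) A ` simplex3)"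
    unfolding image_comp[symmetric]
    by (rule measure_orthogonal_image[OF orthogonal_transformation_signed_perm[OF assms]])
       (intro lmeasurable_compact compact_continuous_image compact_simplex3 continuous_intros)
  also have "\<dots> = \<bar>det (matrix ((*v) A))\<bar> * measure lebesgue simplex3"
    by (rule measure_lebesgue_linear_transformation[OF compact_imp_bounded[OF compact_simplex3]
          fmeasurableD[OF lmeasurable_compact[OF compact_simplex3]] matrix_vector_mul_linear])
  finally show ?thesis
    by (simp add: measure_simplex3 matrix_of_matrix_vector_mul)
qed

lemma compact_tetrahedra: "compact (cube_tetrahedron i)" "compact (poly_tetrahedron i)"
proof -
  obtain p s j where "i = ((p, s), j)"
    by (metis surj_pair)
  then show "compact (cube_tetrahedron i)" "compact (poly_tetrahedron i)"
    using compact_signed_perm_linear_image[OF compact_simplex3, of p s] by (simp_all add: comp_def)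
qed

lemma measure_tetrahedra:
  assumes "i \<in> tetra_labels"
  shows "measure lebesgue (cube_tetrahedron i) = \<bar>det (cube_tetra (snd i))\<bar> / 6"
    and "measure lebesgue (poly_tetrahedron i) = \<bar>det (poly_tetra (snd i))\<bar> / 6"
proof -
  obtain p s j where i: "i = ((p, s), j)" "bij p"
    using assms by (rule tetra_labelsE)
  then show "measure lebesgue (cube_tetrahedron i) = \<bar>det (cube_tetra (snd i))\<bar> / 6"
    "measure lebesgue (poly_tetrahedron i) = \<bar>det (poly_tetra (snd i))\<bar> / 6"
    using measure_signed_perm_linear_simplex3[OF i(2), of s] by simp_all
qed

definition chamber_walls :: "(real^3) set" where
  "chamber_walls = {x. \<exists>i. x$i = 0} \<union> {x. \<exists>i k. i \<noteq> k \<and> (x$i = x$k \<or> x$i = - x$k)}"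

lemma negligible_chamber_walls: "negligible chamber_walls"
proof -
  define normals :: "(real^3) set" where
    "normals = range (\<lambda>i. axis i 1) \<union> (\<lambda>(i, k). axis i 1 - axis k 1) ` {(i, k). i \<noteq> k}
      \<union> (\<lambda>(i, k). axis i 1 + axis k 1) ` {(i, k). i \<noteq> k}"
  have "axis i (1::real) - axis k 1 \<noteq> 0" "axis i (1::real) + axis k 1 \<noteq> 0" if "i \<noteq> k" for i k :: 3
    using that by (auto simp: vec_eq_iff axis_def)
  then have "0 \<notin> normals"
    by (auto simp: normals_def axis_eq_0_iff)
  then have "negligible (\<Union>a\<in>normals. {x. a \<bullet> x = 0})"
    by (intro negligible_Union) (auto simp: normals_def intro!: negligible_hyperplane)
  moreover have "chamber_walls \<subseteq> (\<Union>a\<in>normals. {x. a \<bullet> x = 0})"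
  proof
    fix x assume "x \<in> chamber_walls"
    then consider i where "x$i = 0" | i k where "i \<noteq> k" "x$i = x$k" | i k where "i \<noteq> k" "x$i = - x$k"
      unfolding chamber_walls_def by blast
    then show "x \<in> (\<Union>a\<in>normals. {x. a \<bullet> x = 0})"
    proof cases
      case 1
      then show ?thesis
        by (intro UN_I[of "axis i 1"]) (auto simp: normals_def inner_axis')
    next
      case 2
      then show ?thesis
        by (intro UN_I[of "axis i 1 - axis k 1"]) (auto simp: normals_def inner_axis' inner_diff_left)
    next
      case 3
      then show ?thesis
        by (intro UN_I[of "axis i 1 + axis k 1"]) (auto simp: normals_def inner_axis' inner_add_left)
    qed
  qed
  ultimately show ?thesis
    by (rule negligible_subset)
qed

lemma signed_perm_chamber_overlap:
  assumes "bij p" "bij q" "(p, s) \<noteq> (q, t)" "y \<in> chamber" "y' \<in> chamber"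
    and eq: "signed_perm p s y = signed_perm q t y'"
  shows "signed_perm p s y \<in> chamber_walls"
proof -
  have "y' = y"
    by (rule signed_perm_chamber_unique[OF assms(4,5,1,2) eq])
  note coord = signed_perm_eq_nonneg[OF chamber_nonneg[OF assms(4)] chamber_nonneg[OF assms(4)]
      eq[unfolded \<open>y' = y\<close>]]
  obtain i where i: "p i \<noteq> q i \<or> s i \<noteq> t i"
    using assms(3) by (auto simp: fun_eq_iff)
  show ?thesis
  proof (cases "s i = t i")
    case False
    then show ?thesis
      using coord(2) by (auto simp: chamber_walls_def)
  next
    case True
    define k where "k = inv p (q i)"
    have "p k = q i"
      unfolding k_def using assms(1) by (simp add: bij_is_surj surj_f_inv_f)
    then have "k \<noteq> i" "y $ p k = y $ p i"
      using i True coord(1)[of i] by auto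
    then show ?thesis
      unfolding chamber_walls_def by (intro UnI2 CollectI exI[of _ i] exI[of _ k]) auto
  qed
qed

lemma poly_tetra_in_chamber: "j \<in> tetra_idx \<Longrightarrow> l \<in> simplex3 \<Longrightarrow> poly_tetra j *v l \<in> chamber"
  by (metis chamber_map_cube_tetra chamber_map_in_chamber)

lemma inner_real3: "(a::real^3) \<bullet> z = a$1 * z$1 + a$2 * z$2 + a$3 * z$3"
  by (simp add: inner_vec_def sum_3)

lemma poly_tetra_overlap_hyperplane:
  assumes "j \<in> tetra_idx" "j' \<in> tetra_idx" "j \<noteq> j'"
  obtains a where "a \<noteq> 0" "(*v) (poly_tetra j) ` simplex3 \<inter> (*v) (poly_tetra j') ` simplex3 \<subseteq> {z. a \<bullet> z = 0}"
proof -
  define a1 a2 a3 :: "real^3"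
    where "a1 = vector [0, -28, 5]" and "a2 = vector [460, -532, 95]" and "a3 = vector [-460, 432, 5]"
  have nonzero: "a1 \<noteq> 0" "a2 \<noteq> 0" "a3 \<noteq> 0"
    by (auto simp: a1_def a2_def a3_def vec_eq_iff forall_3)
  let ?T = "\<lambda>k. (*v) (poly_tetra k) ` simplex3"
  have halfspaces:
    "?T 1 \<subseteq> {z. 0 \<le> a1 \<bullet> z}" "\<forall>k\<in>{2,3,4}. ?T k \<subseteq> {z. a1 \<bullet> z \<le> 0}"
    "?T 3 \<subseteq> {z. 0 \<le> a2 \<bullet> z}" "?T 2 \<subseteq> {z. a2 \<bullet> z \<le> 0}"
    "\<forall>k\<in>{2,3}. ?T k \<subseteq> {z. 0 \<le> a3 \<bullet> z}" "?T 4 \<subseteq> {z. a3 \<bullet> z \<le> 0}"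
    by (auto simp: mem_simplex3 inner_real3 a1_def a2_def a3_def poly_tetra_def column_matrix_mult
        vertex_defs field_simps)
  have separate: "A \<inter> B \<subseteq> {z. a \<bullet> z = 0}" if "A \<subseteq> {z. 0 \<le> a \<bullet> z}" "B \<subseteq> {z. a \<bullet> z \<le> 0}"
    for A B and a :: "real^3"
    using that by fastforce
  consider "j = 1" "j' \<in> {2,3,4}" | "j' = 1" "j \<in> {2,3,4}" | "j = 3" "j' = 2" | "j = 2" "j' = 3"
    | "j \<in> {2,3}" "j' = 4" | "j' \<in> {2,3}" "j = 4"
    using assms unfolding tetra_idx_def by auto
  then show ?thesis
  proof cases
    case 1
    then show ?thesis
      using that[OF nonzero(1)] separate[OF halfspaces(1)] halfspaces(2) by blast
  next
    case 2
    then have "?T 1 \<inter> ?T j \<subseteq> {z. a1 \<bullet> z = 0}"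
      using separate[OF halfspaces(1)] halfspaces(2) by blast
    then show ?thesis
      using that[OF nonzero(1)] 2 by (simp add: Int_commute)
  next
    case 3
    then show ?thesis
      using that[OF nonzero(2)] separate[OF halfspaces(3,4)] by blast
  next
    case 4
    then show ?thesis
      using that[OF nonzero(2)] separate[OF halfspaces(3,4)] by (simp add: Int_commute)
  next
    case 5
    then show ?thesis
      using that[OF nonzero(3)] separate[OF _ halfspaces(6)] halfspaces(5) by blast
  next
    case 6
    then have "?T j' \<inter> ?T 4 \<subseteq> {z. a3 \<bullet> z = 0}"
      using separate[OF _ halfspaces(6)] halfspaces(5) by blast
    then show ?thesis
      using that[OF nonzero(3)] 6 by (simp add: Int_commute)
  qed
qed

lemma negligible_poly_tetrahedron_Int:
  assumes "i \<in> tetra_labels" "i' \<in> tetra_labels" "i \<noteq> i'"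
  shows "negligible (poly_tetrahedron i \<inter> poly_tetrahedron i')"
proof -
  obtain p s j where i: "i = ((p, s), j)" "bij p" "j \<in> tetra_idx"
    using assms(1) by (rule tetra_labelsE)
  obtain q t j' where i': "i' = ((q, t), j')" "bij q" "j' \<in> tetra_idx"
    using assms(2) by (rule tetra_labelsE)
  show ?thesis
  proof (cases "(p, s) = (q, t)")
    case False
    have "poly_tetrahedron i \<inter> poly_tetrahedron i' \<subseteq> chamber_walls"
    proof
      fix x assume "x \<in> poly_tetrahedron i \<inter> poly_tetrahedron i'"
      then obtain l l' where "l \<in> simplex3" "l' \<in> simplex3"
        "x = signed_perm p s (poly_tetra j *v l)" "x = signed_perm q t (poly_tetra j' *v l')"
        using i i' by auto
      then show "x \<in> chamber_walls"
        using signed_perm_chamber_overlap[OF i(2) i'(2) False] poly_tetra_in_chamber i(3) i'(3) by metis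
    qed
    then show ?thesis
      using negligible_chamber_walls negligible_subset by blast
  next
    case True
    then have "j \<noteq> j'" "q = p" "t = s"
      using assms(3) i i' by auto
    obtain a where a: "a \<noteq> 0" "(*v) (poly_tetra j) ` simplex3 \<inter> (*v) (poly_tetra j') ` simplex3 \<subseteq> {z. a \<bullet> z = 0}"
      using poly_tetra_overlap_hyperplane[OF i(3) i'(3) \<open>j \<noteq> j'\<close>] by blast
    have "poly_tetrahedron i \<inter> poly_tetrahedron i' \<subseteq> {x. signed_perm p s a \<bullet> x = 0}"
    proof
      fix x assume "x \<in> poly_tetrahedron i \<inter> poly_tetrahedron i'"
      then obtain l l' where l: "l \<in> simplex3" "l' \<in> simplex3"
        "x = signed_perm p s (poly_tetra j *v l)" "x = signed_perm p s (poly_tetra j' *v l')"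
        using i i' \<open>q = p\<close> \<open>t = s\<close> by auto
      then have "poly_tetra j *v l = poly_tetra j' *v l'"
        using inj_signed_perm[OF i(2)] by (metis injD)
      then have "a \<bullet> (poly_tetra j *v l) = 0"
        using a(2) l by blast
      then show "x \<in> {x. signed_perm p s a \<bullet> x = 0}"
        using l inner_signed_perm[OF i(2)] by simp
    qed
    moreover have "signed_perm p s a \<noteq> 0"
      using a(1) norm_signed_perm[OF i(2), of s a] by auto
    ultimately show ?thesis
      using negligible_hyperplane negligible_subset by blast
  qed
qed

lemma measure_centred_cube: "measure lebesgue centred_cube = 1"
proof -
  have "measure lebesgue centred_cube = measure lborel centred_cube"
    unfolding centred_cube_def by (intro measure_completion) auto
  also have "\<dots> = 1"
    unfolding centred_cube_def
    by (simp add: measure_lborel_cbox_eq Basis_real3 inner_axis eucl_le[where 'a="real^3"] axis_eq_axis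
        cube_centre_def)
  finally show ?thesis .
qed

lemma sum_tetra_labels: "(\<Sum>i\<in>tetra_labels. f (snd i)) = real (card signed_perms) * (f 1 + f 2 + f 3 + f 4)"
proof -
  have "(\<Sum>i\<in>tetra_labels. f (snd i)) = (\<Sum>ps\<in>signed_perms. \<Sum>j\<in>tetra_idx. f j)"
    unfolding tetra_labels_def sum.cartesian_product by (simp add: case_prod_unfold)
  also have "\<dots> = real (card signed_perms) * (f 1 + f 2 + f 3 + f 4)"
    by (simp add: tetra_idx_def add.assoc)
  finally show ?thesis .
qed

text \<open>The 48 images of a tetrahedron under the signed permutations tile the cube and \<open>P\<close>
  in the same way.  Rather than counting the signed permutations, their number is bounded below by
  comparing with the unit volume of the cube.\<close>

lemma measure_poly_map_centred_cube: "measure lebesgue (poly_map ` centred_cube) > 1"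
proof -
  have "measure lebesgue (poly_map ` centred_cube) = (\<Sum>i\<in>tetra_labels. measure lebesgue (poly_tetrahedron i))"
    unfolding poly_map_centred_cube
    using finite_tetra_labels lmeasurable_compact[OF compact_tetrahedra(2)] negligible_poly_tetrahedron_Int
    by (intro measure_negligible_finite_Union_image) (auto simp: pairwise_def)
  also have "\<dots> = (\<Sum>i\<in>tetra_labels. \<bar>det (poly_tetra (snd i))\<bar> / 6)"
    by (rule sum.cong) (simp_all add: measure_tetrahedra)
  also have "\<dots> = real (card signed_perms) * (9173 / 383328)"
    unfolding sum_tetra_labels[of "\<lambda>j. \<bar>det (poly_tetra j)\<bar> / 6"] det_poly_tetra by simp
  finally have volume_P: "measure lebesgue (poly_map ` centred_cube) = real (card signed_perms) * (9173 / 383328)" .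
  have "1 = measure lebesgue (\<Union> (cube_tetrahedron ` tetra_labels))"
    using measure_centred_cube centred_cube_eq_Union by simp
  also have "\<dots> \<le> (\<Sum>i\<in>tetra_labels. measure lebesgue (cube_tetrahedron i))"
    by (intro measure_UNION_le finite_tetra_labels fmeasurableD lmeasurable_compact compact_tetrahedra)
  also have "\<dots> = (\<Sum>i\<in>tetra_labels. \<bar>det (cube_tetra (snd i))\<bar> / 6)"
    by (rule sum.cong) (simp_all add: measure_tetrahedra)
  also have "\<dots> = real (card signed_perms) / 48"
    unfolding sum_tetra_labels[of "\<lambda>j. \<bar>det (cube_tetra j)\<bar> / 6"] det_cube_tetra by simp
  finally show ?thesis
    unfolding volume_P by simp
qed

lemma polyhedron3_poly_map_centred_cube: "polyhedron3 (poly_map ` centred_cube)"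
  unfolding polyhedron3_def
proof (intro exI[of _ "poly_tetrahedron ` tetra_labels"] conjI ballI)
  show "finite (poly_tetrahedron ` tetra_labels)"
    using finite_tetra_labels by simp
  show "poly_tetrahedron ` tetra_labels \<noteq> {}"
    by (auto simp: tetra_labels_def signed_perms_def tetra_idx_def)
  show "poly_map ` centred_cube = \<Union> (poly_tetrahedron ` tetra_labels)"
    by (rule poly_map_centred_cube)
  fix Q assume "Q \<in> poly_tetrahedron ` tetra_labels"
  then obtain p s j where Q: "Q = (signed_perm p s \<circ> (*v) (poly_tetra j)) ` simplex3" "bij p" "j \<in> tetra_idx"
    by (auto elim!: tetra_labelsE)
  have "det (poly_tetra j) \<noteq> 0"
    using Q(3) det_poly_tetra by (auto simp: tetra_idx_def)
  then have "inj (signed_perm p s \<circ> (*v) (poly_tetra j))"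
    by (intro inj_compose inj_signed_perm Q(2)) (simp add: inj_matrix_vector_mult invertible_det_nz)
  then have "aff_dim Q = aff_dim simplex3"
    unfolding Q(1) by (rule aff_dim_injective_linear_image[OF linear_signed_perm_matrix])
  then show "aff_dim Q = 3"
    by (simp add: aff_dim_simplex3)
  show "polytope Q"
    unfolding Q(1) by (rule polytope_linear_image[OF linear_signed_perm_matrix polytope_simplex3])
qed

text \<open>The vertex \<open>wv\<close> of \<open>P\<close> and its mirror image have as midpoint the image of a point outside the cube.\<close>

lemma not_convex_poly_map_centred_cube: "\<not> convex (poly_map ` centred_cube)"
proof
  assume convex: "convex (poly_map ` centred_cube)"
  define flip1 :: "3 \<Rightarrow> bool" where "flip1 i \<longleftrightarrow> i = 1" for i
  define u where "u = (vector [0, 8/15, 8/15] :: real^3)"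
  have vv: "vv \<in> chamber" "vv \<in> centred_cube" "chamber_map vv = wv"
    using chamber_map_part3[of vv]
    by (simp_all add: vv_def wv_def chamber_def mem_centred_cube forall_3 chamber_part3_def
        chamber_lin3_def vec_eq_iff)
  have "poly_map vv = wv" "poly_map (signed_perm id flip1 vv) = signed_perm id flip1 wv"
    using poly_map_signed_perm[of id vv flip1] poly_map_chamber vv by simp_all
  moreover have "signed_perm id flip1 vv \<in> centred_cube"
    using signed_perm_mem_frontier_centred_cube(1)[of id] vv by simp
  ultimately have "wv \<in> poly_map ` centred_cube" "signed_perm id flip1 wv \<in> poly_map ` centred_cube"
    using vv(2) by (metis image_eqI)+
  then have "(1/2) *\<^sub>R wv + (1/2) *\<^sub>R signed_perm id flip1 wv \<in> poly_map ` centred_cube"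
    using convexD[OF convex] by simp
  moreover have "(1/2) *\<^sub>R wv + (1/2) *\<^sub>R signed_perm id flip1 wv = poly_map u"
    using poly_map_chamber[of u]
    by (simp add: u_def wv_def flip1_def chamber_def chamber_map_def chamber_lin2_def vec_eq_iff forall_3)
  ultimately obtain z where "z \<in> centred_cube" "poly_map z = poly_map u"
    by auto
  then have "u \<in> centred_cube"
    using inj_poly_map by (auto dest: injD)
  then show False
    by (simp add: mem_centred_cube u_def forall_3)
qed

lemma unit_cube3_eq_translation: "unit_cube3 = (+) cube_centre ` centred_cube"
proof -
  have unit_interval: "(0 \<le> a \<and> a \<le> 1) \<longleftrightarrow> \<bar>a - 1/2\<bar> \<le> (1::real)/2" for a
    by (simp only: abs_le_iff) auto
  have shift: "(x - cube_centre) $ i = x $ i - 1/2" for x i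
    by (simp add: cube_centre_def)
  have "x \<in> unit_cube3 \<longleftrightarrow> x - cube_centre \<in> centred_cube" for x
    unfolding unit_cube3_def mem_Collect_eq mem_centred_cube shift unit_interval ..
  then show ?thesis
    by (auto simp: image_iff) (metis add.commute diff_add_cancel)
qed

lemma compact_face_triangle: "compact (face_triangle i)"
proof -
  obtain p s j where "i = ((p, s), j)"
    by (metis surj_pair)
  moreover have "compact (simplex3 \<inter> {l::real^3. l$1 + l$2 + l$3 = 1})"
    by (intro compact_Int_closed compact_simplex3 closed_Collect_eq continuous_intros)
  ultimately show ?thesis
    using compact_signed_perm_linear_image by simp
qed

lemma intrinsically_isometric_frontier_poly_map_unit_cube:
  "intrinsically_isometric (frontier (poly_map ` centred_cube)) (frontier unit_cube3)"
proof (rule intrinsically_isometric_piecewise_isometry[where h = "\<lambda>x. poly_map (x - cube_centre)"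
      and \<A> = "(\<lambda>i. (+) cube_centre ` face_triangle i) ` tetra_labels"])
  have frontier_cube: "frontier unit_cube3 = (+) cube_centre ` frontier centred_cube"
    by (simp add: unit_cube3_eq_translation frontier_translation)
  have "frontier (poly_map ` centred_cube) = poly_map ` frontier centred_cube"
    by (rule frontier_injective_image_compact[OF continuous_poly_map inj_poly_map])
       (simp add: centred_cube_def)
  then show "bij_betw (\<lambda>x. poly_map (x - cube_centre)) (frontier unit_cube3) (frontier (poly_map ` centred_cube))"
    unfolding frontier_cube using inj_poly_map
    by (intro bij_betw_imageI) (auto simp: inj_on_def image_image dest: injD)
  show "finite ((\<lambda>i. (+) cube_centre ` face_triangle i) ` tetra_labels)"
    using finite_tetra_labels by simp
  show "\<Union> ((\<lambda>i. (+) cube_centre ` face_triangle i) ` tetra_labels) = frontier unit_cube3"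
    unfolding frontier_cube frontier_centred_cube_eq_Union by (simp add: image_UN)
  show "compact A" if "A \<in> (\<lambda>i. (+) cube_centre ` face_triangle i) ` tetra_labels" for A
    using that compact_translation[OF compact_face_triangle] by auto
  show "dist (poly_map (x - cube_centre)) (poly_map (y - cube_centre)) = dist x y"
    if "A \<in> (\<lambda>i. (+) cube_centre ` face_triangle i) ` tetra_labels" "x \<in> A" "y \<in> A" for A x y
    using that poly_map_isometric_on_face_triangle by (auto simp: dist_norm)
qed

theorem mainTheorem1:
  shows "\<exists>P :: (real^3) set. polyhedron3 P \<and> \<not> convex P \<and>
           intrinsically_isometric (frontier P) (frontier unit_cube3) \<and>
           measure lebesgue P > 1"
  using polyhedron3_poly_map_centred_cube not_convex_poly_map_centred_cube
    intrinsically_isometric_frontier_poly_map_unit_cube measure_poly_map_centred_cube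
  by blast

end
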